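(* Let $(E,\rho_\theta)$ be a complete $b_v(\theta)$ metric space whose function $\theta$ is bounded, and let $S:E\to E$ satisfy $\rho_\theta(Su,Sw)\le\alpha\rho_\theta(u,w)+\beta\rho_\theta(u,Su)+\gamma\rho_\theta(w,Sw)$ for all $u,w\in E$, where $\alpha,\beta,\gamma\ge0$ are constants with $\alpha+\beta+\gamma<1$, and where $\Gamma_1<\frac1{\Gamma_2}$ with $\Gamma_1=\min\{\beta,\gamma\}$ and $\Gamma_2=\max\{\theta(u,Su),\theta(Su,u)\}$ (for all $u\in E$). Then $S$ has a unique fixed point. Moreover, for any $u_0\in E$, the sequence $\{u_n\}$ defined by $u_n=Su_{n-1}$ converges to the unique fixed point of $S$.
   Context: Let $E$ be a nonempty set, $\theta:E\times E\to[1,\infty)$ a function and $v\in\mathbb{N}$. A map $\rho_\theta:E\times E\to[0,\infty)$ is a $b_v(\theta)$ metric (and $(E,\rho_\theta)$ a $b_v(\theta)$ metric space) if for all $u,w\in E$: $\rho_\theta(u,w)=0$ iff $u=w$; $\rho_\theta(u,w)=\rho_\theta(w,u)$; and for all $u,z_1,\dots,z_v,w\in E$ pairwise distinct, $\rho_\theta(u,w)\le\theta(u,w)[\rho_\theta(u,z_1)+\rho_\theta(z_1,z_2)+\dots+\rho_\theta(z_{v-1},z_v)+\rho_\theta(z_v,w)]$. A sequence $\{u_n\}$ converges to $u$ if for every $\varepsilon>0$ there is $n_0$ with $\rho_\theta(u_n,u)<\varepsilon$ for all $n\ge n_0$; it is Cauchy if for every $\varepsilon>0$ there is $n_0$ with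 $\rho_\theta(u_n,u_{n+p})<\varepsilon$ for all $n\ge n_0$ and $p>0$; the space is complete if every Cauchy sequence converges in $E$. *)

theory Defs
  imports Complex_Main
begin

text \<open>b_v(theta) metric on the whole type 'a (the set E is the universe of 'a).
  The points u, z_1..z_v, w are encoded as p 0 = u, p i = z i (1 \<le> i \<le> v),
  p (v+1) = w; pairwise distinctness is injectivity of p on {0..v+1}.\<close>
definition bv_metric :: "nat \<Rightarrow> ('a \<Rightarrow> 'a \<Rightarrow> real) \<Rightarrow> ('a \<Rightarrow> 'a \<Rightarrow> real) \<Rightarrow> bool" where
  "bv_metric v \<theta> \<rho> \<longleftrightarrow>
     (\<forall>u w. 1 \<le> \<theta> u w) \<and>
     (\<forall>u w. 0 \<le> \<rho> u w) \<and>
     (\<forall>u w. \<rho> u w = 0 \<longleftrightarrow> u = w) \<and>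
     (\<forall>u w. \<rho> u w = \<rho> w u) \<and>
     (\<forall>u w (z :: nat \<Rightarrow> 'a).
        let p = (\<lambda>i. if i = 0 then u else if i = Suc v then w else z i) in
        inj_on p {0..Suc v} \<longrightarrow>
        \<rho> u w \<le> \<theta> u w * (\<Sum>i\<le>v. \<rho> (p i) (p (Suc i))))"

definition bv_converges :: "('a \<Rightarrow> 'a \<Rightarrow> real) \<Rightarrow> (nat \<Rightarrow> 'a) \<Rightarrow> 'a \<Rightarrow> bool" where
  "bv_converges \<rho> x u \<longleftrightarrow> (\<forall>\<epsilon>>0. \<exists>n0. \<forall>n\<ge>n0. \<rho> (x n) u < \<epsilon>)"

definition bv_cauchy :: "('a \<Rightarrow> 'a \<Rightarrow> real) \<Rightarrow> (nat \<Rightarrow> 'a) \<Rightarrow> bool" where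
  "bv_cauchy \<rho> x \<longleftrightarrow> (\<forall>\<epsilon>>0. \<exists>n0. \<forall>n\<ge>n0. \<forall>p>0. \<rho> (x n) (x (n + p)) < \<epsilon>)"

definition bv_complete :: "('a \<Rightarrow> 'a \<Rightarrow> real) \<Rightarrow> bool" where
  "bv_complete \<rho> \<longleftrightarrow> (\<forall>x. bv_cauchy \<rho> x \<longrightarrow> (\<exists>u. bv_converges \<rho> x u))"

end

theory Submission
  imports Defs
begin

text \<open>Along a Picard orbit the consecutive distances shrink by the factor (\<alpha> + \<beta>) / (1 - \<gamma>),
  and a fixed point attracts every orbit geometrically; this gives uniqueness and the convergence
  claim without any triangle inequality. For existence, the b_v inequality takes the place of the
  triangle inequality: routing the distance from x_0 to x_P through x_1, ..., x_(v-1), x_N and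
  comparing (x_N, x_P) with (x_0, x_(P-N)) shows that the orbit is bounded once \<theta> is, hence
  Cauchy. If its limit z were not fixed, the chain z, x_(n+1), ..., x_(n+v), S z would give
  \<rho>(z, S z) \<le> \<theta>(z, S z) ((v + 1) \<epsilon> + min \<beta> \<gamma> \<rho>(z, S z)) for every \<epsilon> > 0, contradicting
  min \<beta> \<gamma> \<theta>(z, S z) < 1. Unless the orbit meets a fixed point it is injective, so all these
  chains consist of pairwise distinct points.\<close>

lemma bv_metricD:
  assumes "bv_metric v \<theta> \<rho>"
  shows "1 \<le> \<theta> u w" "0 \<le> \<rho> u w" "\<rho> u w = 0 \<longleftrightarrow> u = w" "\<rho> u w = \<rho> w u"
  using assms unfolding bv_metric_def by auto

lemma eventually_geometric_less:
  fixes r B \<epsilon> :: real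
  assumes "0 \<le> r" "r < 1" "0 < \<epsilon>"
  shows "eventually (\<lambda>n. B * r ^ n < \<epsilon>) sequentially"
proof -
  have "(\<lambda>n. B * r ^ n) \<longlonglongrightarrow> 0"
    using assms by (intro tendsto_mult_right_zero LIMSEQ_power_zero) simp
  then show ?thesis
    using assms(3) by (rule order_tendstoD(2))
qed

lemma bv_converges_geometric:
  fixes B r :: real
  assumes "\<And>n. \<rho> (x n) u \<le> B * r ^ n" "0 \<le> r" "r < 1"
  shows "bv_converges \<rho> x u"
  unfolding bv_converges_def
proof (intro allI impI)
  fix \<epsilon> :: real
  assume "0 < \<epsilon>"
  have "eventually (\<lambda>n. \<rho> (x n) u < \<epsilon>) sequentially"
    using eventually_geometric_less[OF assms(2,3) \<open>0 < \<epsilon>\<close>, of B]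
    by (rule eventually_mono) (rule le_less_trans[OF assms(1)])
  then show "\<exists>n0. \<forall>n\<ge>n0. \<rho> (x n) u < \<epsilon>"
    unfolding eventually_sequentially .
qed

lemma bv_cauchy_geometric:
  fixes B r :: real
  assumes "\<And>n p. \<rho> (x n) (x (n + p)) \<le> B * r ^ n" "0 \<le> r" "r < 1"
  shows "bv_cauchy \<rho> x"
  unfolding bv_cauchy_def
proof (intro allI impI)
  fix \<epsilon> :: real
  assume "0 < \<epsilon>"
  have "eventually (\<lambda>n. \<forall>p. \<rho> (x n) (x (n + p)) < \<epsilon>) sequentially"
    using eventually_geometric_less[OF assms(2,3) \<open>0 < \<epsilon>\<close>, of B]
    by (rule eventually_mono) (blast intro: le_less_trans[OF assms(1)])
  then show "\<exists>n0. \<forall>n\<ge>n0. \<forall>p>0. \<rho> (x n) (x (n + p)) < \<epsilon>"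
    unfolding eventually_sequentially by blast
qed

lemma linear_recurrence_le_geometric:
  fixes e :: "nat \<Rightarrow> real"
  assumes step: "\<And>n. e (Suc n) \<le> a * e n + c * r ^ n"
    and "0 \<le> a" "a < r" "0 \<le> c" "0 \<le> e 0"
  shows "e n \<le> (e 0 + c / (r - a)) * r ^ n"
proof (induction n)
  case 0
  show ?case
    using assms(3,4) by simp
next
  case (Suc n)
  define B where "B = e 0 + c / (r - a)"
  have "(r - a) * B = (r - a) * e 0 + c"
    using assms(3) by (simp add: B_def distrib_left)
  moreover have "0 \<le> (r - a) * e 0"
    using assms(3,5) by simp
  ultimately have "a * B + c \<le> r * B"
    by (simp add: left_diff_distrib)
  moreover have "0 \<le> r ^ n"
    using assms(2,3) by simp
  ultimately have "(a * B + c) * r ^ n \<le> (r * B) * r ^ n"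
    by (rule mult_right_mono)
  moreover have "e (Suc n) \<le> (a * B + c) * r ^ n"
    using step[of n] mult_left_mono[OF Suc.IH \<open>0 \<le> a\<close>]
    by (simp add: B_def algebra_simps)
  ultimately show ?case
    by (simp add: B_def mult_ac)
qed

lemma bdd_above_range_if_recursive_bound:
  fixes b :: "nat \<Rightarrow> real"
  assumes "0 < N" "0 \<le> q" "q < 1"
    and rec: "\<And>n. N < n \<Longrightarrow> b n \<le> c + q * b (n - N)"
  shows "bdd_above (range b)"
proof -
  define M where "M = max (Max (b ` {..N})) (c / (1 - q))"
  have "b n \<le> M" for n
  proof (induction n rule: less_induct)
    case (less n)
    show ?case
    proof (cases "n \<le> N")
      case True
      then show ?thesis
        unfolding M_def by (simp add: le_max_iff_disj)
    next
      case False
      then have "b n \<le> c + q * b (n - N)"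
        by (intro rec) simp
      also have "\<dots> \<le> c + q * M"
        using less.IH[of "n - N"] False assms(1,2) by (simp add: mult_left_mono)
      also have "\<dots> \<le> M"
      proof -
        have "c / (1 - q) \<le> M"
          by (simp add: M_def)
        then have "c \<le> (1 - q) * M"
          using assms(3) by (simp add: pos_divide_le_eq mult.commute)
        then show ?thesis
          by (simp add: algebra_simps)
      qed
      finally show ?thesis .
    qed
  qed
  then show ?thesis
    by (intro bdd_aboveI2)
qed

lemma mult_less_1_if_less_inverse_max:
  fixes m a b :: real
  assumes "0 \<le> m" "1 \<le> a" "m < 1 / max a b"
  shows "m * a < 1"
proof -
  have "0 < max a b"
    using assms(2) by (simp add: less_max_iff_disj)
  then have "m * max a b < 1"
    using assms(3) by (simp only: pos_less_divide_eq)
  moreover have "m * a \<le> m * max a b"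
    using assms(1) by (intro mult_left_mono) auto
  ultimately show ?thesis
    by linarith
qed

lemma bv_metric_chain:
  assumes "bv_metric v \<theta> \<rho>" "inj_on p {0..Suc v}"
  shows "\<rho> (p 0) (p (Suc v)) \<le> \<theta> (p 0) (p (Suc v)) * (\<Sum>i\<le>v. \<rho> (p i) (p (Suc i)))"
proof -
  have chain: "\<And>u w z. let q = (\<lambda>i. if i = 0 then u else if i = Suc v then w else z i) in
      inj_on q {0..Suc v} \<longrightarrow> \<rho> u w \<le> \<theta> u w * (\<Sum>i\<le>v. \<rho> (q i) (q (Suc i)))"
    using assms(1) unfolding bv_metric_def by blast
  have "(\<lambda>i. if i = 0 then p 0 else if i = Suc v then p (Suc v) else p i) = p"
    by auto
  then show ?thesis
    using chain[of "p 0" "p (Suc v)" p] assms(2) by (simp only: Let_def)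
qed

locale bv_reich_contraction =
  fixes v :: nat and \<theta> \<rho> :: "'a \<Rightarrow> 'a \<Rightarrow> real" and S :: "'a \<Rightarrow> 'a" and \<alpha> \<beta> \<gamma> :: real
  assumes v_pos: "1 \<le> v"
    and metric: "bv_metric v \<theta> \<rho>"
    and contraction: "\<And>u w. \<rho> (S u) (S w) \<le> \<alpha> * \<rho> u w + \<beta> * \<rho> u (S u) + \<gamma> * \<rho> w (S w)"
    and nonneg: "0 \<le> \<alpha>" "0 \<le> \<beta>" "0 \<le> \<gamma>"
    and sum_less_1: "\<alpha> + \<beta> + \<gamma> < 1"
begin

lemmas theta_ge_1 = bv_metricD(1)[OF metric]
  and dist_nonneg = bv_metricD(2)[OF metric]
  and dist_eq_0_iff = bv_metricD(3)[OF metric]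
  and dist_commute = bv_metricD(4)[OF metric]

lemma dist_self [simp]: "\<rho> u u = 0"
  by (simp add: dist_eq_0_iff)

definition step_ratio :: real where
  "step_ratio = (\<alpha> + \<beta>) / (1 - \<gamma>)"

definition rate :: real where
  "rate = (1 + max \<alpha> step_ratio) / 2"

lemma step_ratio_nonneg: "0 \<le> step_ratio"
  and step_ratio_less_1: "step_ratio < 1"
  using nonneg sum_less_1 by (simp_all add: step_ratio_def divide_simps)

lemma rate_gt: "\<alpha> < rate" "step_ratio < rate"
  and rate_nonneg: "0 \<le> rate"
  and rate_less_1: "rate < 1"
  using nonneg sum_less_1 step_ratio_nonneg step_ratio_less_1 by (auto simp: rate_def)

lemma fixed_point_unique:
  assumes "S a = a" "S b = b"
  shows "a = b"
proof -
  have "(1 - \<alpha>) * \<rho> a b \<le> 0"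
    using contraction[of a b] assms by (simp add: algebra_simps)
  then have "\<rho> a b \<le> 0"
    using nonneg sum_less_1 by (simp add: mult_le_0_iff)
  then show ?thesis
    using dist_nonneg[of a b] dist_eq_0_iff[of a b] by simp
qed

lemma contraction_max_min:
  "\<rho> (S u) (S w) \<le> \<alpha> * \<rho> u w + max \<beta> \<gamma> * \<rho> u (S u) + min \<beta> \<gamma> * \<rho> w (S w)"
proof (cases "\<beta> \<le> \<gamma>")
  case True
  then show ?thesis
    using contraction[of w u] by (simp add: dist_commute[of u w] dist_commute[of "S u"])
next
  case False
  then show ?thesis
    using contraction[of u w] by simp
qed

abbreviation orbit :: "'a \<Rightarrow> nat \<Rightarrow> 'a" where
  "orbit u \<equiv> \<lambda>n. (S ^^ n) u"

lemma orbit_step_contracts: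
  "\<rho> (orbit u (Suc n)) (orbit u (Suc (Suc n))) \<le> step_ratio * \<rho> (orbit u n) (orbit u (Suc n))"
proof -
  let ?d = "\<lambda>n. \<rho> (orbit u n) (orbit u (Suc n))"
  have "?d (Suc n) \<le> \<alpha> * ?d n + \<beta> * ?d n + \<gamma> * ?d (Suc n)"
    using contraction[of "orbit u n" "orbit u (Suc n)"] by simp
  then have "(1 - \<gamma>) * ?d (Suc n) \<le> (\<alpha> + \<beta>) * ?d n"
    by (simp add: algebra_simps)
  then show ?thesis
    using nonneg sum_less_1 by (simp add: step_ratio_def pos_le_divide_eq mult.commute)
qed

lemma orbit_step_le_geometric:
  "\<rho> (orbit u n) (orbit u (Suc n)) \<le> \<rho> u (S u) * rate ^ n"
  using linear_recurrence_le_geometric[of "\<lambda>n. \<rho> (orbit u n) (orbit u (Suc n))" step_ratio 0 rate]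
    orbit_step_contracts step_ratio_nonneg rate_gt dist_nonneg by simp

lemma orbit_converges_to_fixed_point:
  assumes "S p = p"
  shows "bv_converges \<rho> (orbit u) p"
proof -
  let ?e = "\<lambda>n. \<rho> (orbit u n) p"
  have "?e (Suc n) \<le> \<alpha> * ?e n + (\<beta> * \<rho> u (S u)) * rate ^ n" for n
  proof -
    have "?e (Suc n) \<le> \<alpha> * ?e n + \<beta> * \<rho> (orbit u n) (orbit u (Suc n))"
      using contraction[of "orbit u n" p] assms by simp
    also have "\<dots> \<le> \<alpha> * ?e n + \<beta> * (\<rho> u (S u) * rate ^ n)"
      using orbit_step_le_geometric nonneg by (simp add: mult_left_mono)
    finally show ?thesis
      by (simp add: mult_ac)
  qed
  then have "?e n \<le> (?e 0 + \<beta> * \<rho> u (S u) / (rate - \<alpha>)) * rate ^ n" for n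
    by (rule linear_recurrence_le_geometric) (use nonneg rate_gt dist_nonneg in auto)
  then show ?thesis
    using rate_nonneg rate_less_1 by (rule bv_converges_geometric)
qed

lemma orbit_inj:
  assumes no_fixed: "\<And>n. S (orbit u n) \<noteq> orbit u n"
  shows "inj (orbit u)"
proof -
  let ?d = "\<lambda>n. \<rho> (orbit u n) (orbit u (Suc n))"
  have d_pos: "0 < ?d n" for n
    using no_fixed[of n] dist_nonneg dist_eq_0_iff by (simp add: order_less_le)
  have "decseq ?d"
    using step_ratio_less_1 d_pos
    by (intro decseq_SucI order_trans[OF orbit_step_contracts mult_left_le_one_le])
      (auto simp: less_imp_le step_ratio_nonneg)
  have no_return: "orbit u a \<noteq> orbit u b" if "a < b" for a b
  proof
    assume same: "orbit u a = orbit u b"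
    have "?d b \<le> ?d (Suc a)"
      using decseqD[OF \<open>decseq ?d\<close>, of "Suc a" b] that by simp
    also have "\<dots> \<le> step_ratio * ?d a"
      by (rule orbit_step_contracts)
    also have "\<dots> < ?d a"
      using step_ratio_less_1 d_pos[of a] by simp
    also have "\<dots> = ?d b"
      using same by (metis funpow.simps(2) o_apply)
    finally show False
      by simp
  qed
  show ?thesis
    by (rule injI) (metis linorder_neqE_nat no_return)
qed

lemma orbit_shift_le_geometric:
  "\<exists>C. \<forall>m n. \<rho> (orbit u n) (orbit u (m + n)) \<le> (\<rho> u (orbit u m) + C) * rate ^ n"
proof (intro exI allI)
  fix m n
  let ?e = "\<lambda>n. \<rho> (orbit u n) (orbit u (m + n))"
  let ?c = "(\<beta> + \<gamma>) * \<rho> u (S u)"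
  have "?e (Suc n) \<le> \<alpha> * ?e n + ?c * rate ^ n" for n
  proof -
    have "rate ^ (m + n) \<le> rate ^ n"
      using rate_nonneg rate_less_1 by (simp add: power_decreasing)
    then have far: "\<rho> (orbit u (m + n)) (orbit u (Suc (m + n))) \<le> \<rho> u (S u) * rate ^ n"
      using orbit_step_le_geometric[where n="m + n"] dist_nonneg[of u "S u"]
      by (meson mult_left_mono order_trans)
    have "?e (Suc n) \<le> \<alpha> * ?e n + \<beta> * \<rho> (orbit u n) (orbit u (Suc n))
        + \<gamma> * \<rho> (orbit u (m + n)) (orbit u (Suc (m + n)))"
      using contraction[of "orbit u n" "orbit u (m + n)"] by simp
    also have "\<dots> \<le> \<alpha> * ?e n + \<beta> * (\<rho> u (S u) * rate ^ n) + \<gamma> * (\<rho> u (S u) * rate ^ n)"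
      using orbit_step_le_geometric[where n=n] far nonneg by (intro add_mono mult_left_mono) auto
    finally show ?thesis
      by (simp add: algebra_simps)
  qed
  then have "?e n \<le> (?e 0 + ?c / (rate - \<alpha>)) * rate ^ n"
    by (rule linear_recurrence_le_geometric) (use nonneg rate_gt dist_nonneg in auto)
  then show "?e n \<le> (\<rho> u (orbit u m) + ?c / (rate - \<alpha>)) * rate ^ n"
    by simp
qed

lemma orbit_chain_bound:
  assumes inj: "inj (orbit u)" and "v \<le> N"
  shows "\<exists>A\<ge>0. \<forall>P>N. \<rho> u (orbit u P) \<le> \<theta> u (orbit u P) * (A + \<rho> (orbit u N) (orbit u P))"
proof (intro exI conjI allI impI)
  define q where "q i = orbit u (if i < v then i else N)" for i
  show "0 \<le> (\<Sum>i<v. \<rho> (q i) (q (Suc i)))"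
    by (simp add: sum_nonneg dist_nonneg)
  fix P
  assume "N < P"
  \<comment> \<open>the chain u, x_1, ..., x_(v-1), x_N, x_P, whose first v links do not depend on P\<close>
  define f where "f i = (if i < v then i else if i = v then N else P)" for i
  have "inj_on f {0..Suc v}"
    using \<open>v \<le> N\<close> \<open>N < P\<close> unfolding inj_on_def f_def by auto
  then have "inj_on (orbit u \<circ> f) {0..Suc v}"
    using inj by (simp add: comp_inj_on inj_on_subset)
  then have "\<rho> u (orbit u P) \<le> \<theta> u (orbit u P) * (\<Sum>i\<le>v. \<rho> (orbit u (f i)) (orbit u (f (Suc i))))"
    using bv_metric_chain[OF metric, of "orbit u \<circ> f"] v_pos by (simp add: f_def)
  also have "(\<Sum>i\<le>v. \<rho> (orbit u (f i)) (orbit u (f (Suc i))))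
      = (\<Sum>i<v. \<rho> (orbit u (f i)) (orbit u (f (Suc i)))) + \<rho> (orbit u N) (orbit u P)"
    by (simp add: lessThan_Suc_atMost[symmetric] f_def)
  also have "(\<Sum>i<v. \<rho> (orbit u (f i)) (orbit u (f (Suc i)))) = (\<Sum>i<v. \<rho> (q i) (q (Suc i)))"
    by (rule sum.cong) (auto simp: f_def q_def)
  finally show "\<rho> u (orbit u P) \<le> \<theta> u (orbit u P) * ((\<Sum>i<v. \<rho> (q i) (q (Suc i))) + \<rho> (orbit u N) (orbit u P))" .
qed

lemma orbit_bounded:
  assumes inj: "inj (orbit u)" and K: "\<And>u w. \<theta> u w \<le> K"
  shows "bdd_above (range (\<lambda>n. \<rho> u (orbit u n)))"
proof -
  obtain C where C: "\<And>m n. \<rho> (orbit u n) (orbit u (m + n)) \<le> (\<rho> u (orbit u m) + C) * rate ^ n"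
    using orbit_shift_le_geometric by blast
  obtain N0 where "\<And>n. N0 \<le> n \<Longrightarrow> K * rate ^ n < 1"
    using eventually_geometric_less[OF rate_nonneg rate_less_1, of 1 K]
    unfolding eventually_sequentially by auto
  then obtain N where N: "v \<le> N" "K * rate ^ N < 1"
    by (metis max.cobounded1 max.cobounded2)
  obtain A where A: "0 \<le> A"
    and chain: "\<And>P. N < P \<Longrightarrow> \<rho> u (orbit u P) \<le> \<theta> u (orbit u P) * (A + \<rho> (orbit u N) (orbit u P))"
    using orbit_chain_bound[OF inj N(1)] by blast
  have "0 \<le> K"
    using K[of u u] theta_ge_1[of u u] by simp
  show ?thesis
  proof (rule bdd_above_range_if_recursive_bound)
    show "0 < N" "0 \<le> K * rate ^ N" "K * rate ^ N < 1"
      using v_pos N \<open>0 \<le> K\<close> rate_nonneg by auto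
    fix P
    assume "N < P"
    have "\<rho> u (orbit u P) \<le> \<theta> u (orbit u P) * (A + \<rho> (orbit u N) (orbit u P))"
      using chain[OF \<open>N < P\<close>] .
    also have "\<dots> \<le> K * (A + \<rho> (orbit u N) (orbit u P))"
      using K A dist_nonneg by (intro mult_right_mono) auto
    also have "\<dots> \<le> K * (A + (\<rho> u (orbit u (P - N)) + C) * rate ^ N)"
      using C[where m="P - N" and n=N] \<open>N < P\<close> \<open>0 \<le> K\<close> by (simp add: mult_left_mono)
    also have "\<dots> = K * (A + C * rate ^ N) + K * rate ^ N * \<rho> u (orbit u (P - N))"
      by (simp add: algebra_simps)
    finally show "\<rho> u (orbit u P) \<le> K * (A + C * rate ^ N) + K * rate ^ N * \<rho> u (orbit u (P - N))" .
  qed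
qed

lemma orbit_cauchy:
  assumes "inj (orbit u)" "\<And>u w. \<theta> u w \<le> K"
  shows "bv_cauchy \<rho> (orbit u)"
proof -
  obtain M where M: "\<And>m. \<rho> u (orbit u m) \<le> M"
    using orbit_bounded[OF assms] by (auto simp: bdd_above_def)
  obtain C where C: "\<And>m n. \<rho> (orbit u n) (orbit u (m + n)) \<le> (\<rho> u (orbit u m) + C) * rate ^ n"
    using orbit_shift_le_geometric by blast
  have "\<rho> (orbit u n) (orbit u (n + p)) \<le> (M + C) * rate ^ n" for n p
  proof -
    have "\<rho> (orbit u n) (orbit u (n + p)) \<le> (\<rho> u (orbit u p) + C) * rate ^ n"
      using C[where m=p and n=n] by (simp only: add.commute)
    also have "\<dots> \<le> (M + C) * rate ^ n"
      using M[of p] rate_nonneg by (intro mult_right_mono) auto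
    finally show ?thesis .
  qed
  then show ?thesis
    using rate_nonneg rate_less_1 by (rule bv_cauchy_geometric)
qed

lemma dist_image_le_if_near:
  assumes "\<rho> y z \<le> \<epsilon>" "\<rho> y (S y) \<le> \<epsilon>"
  shows "\<rho> (S y) (S z) \<le> \<epsilon> + min \<beta> \<gamma> * \<rho> z (S z)"
proof -
  have "0 \<le> \<epsilon>" "0 \<le> max \<beta> \<gamma>" "\<alpha> + max \<beta> \<gamma> \<le> 1"
    using assms(1) dist_nonneg[of y z] nonneg sum_less_1 by auto
  have "\<rho> (S y) (S z) \<le> \<alpha> * \<rho> y z + max \<beta> \<gamma> * \<rho> y (S y) + min \<beta> \<gamma> * \<rho> z (S z)"
    by (rule contraction_max_min)
  also have "\<dots> \<le> \<alpha> * \<epsilon> + max \<beta> \<gamma> * \<epsilon> + min \<beta> \<gamma> * \<rho> z (S z)"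
    using assms \<open>0 \<le> max \<beta> \<gamma>\<close> nonneg by (intro add_mono mult_left_mono) auto
  also have "\<alpha> * \<epsilon> + max \<beta> \<gamma> * \<epsilon> \<le> \<epsilon>"
    using mult_right_mono[OF \<open>\<alpha> + max \<beta> \<gamma> \<le> 1\<close> \<open>0 \<le> \<epsilon>\<close>] by (simp add: distrib_right)
  finally show ?thesis
    by simp
qed

lemma eventually_orbit_neq:
  assumes "inj (orbit u)"
  shows "eventually (\<lambda>n. orbit u n \<noteq> y) sequentially"
proof -
  have "finite (orbit u -` {y})"
    using assms by (intro finite_vimageI) auto
  then show ?thesis
    unfolding cofinite_eq_sequentially[symmetric] eventually_cofinite by (simp add: vimage_def)
qed

lemma orbit_eventually_near:
  fixes \<epsilon> :: real
  assumes inj: "inj (orbit u)" and lim: "bv_converges \<rho> (orbit u) z" and "0 < \<epsilon>"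
  obtains n where "\<And>j. n \<le> j \<Longrightarrow> \<rho> (orbit u j) z < \<epsilon>
      \<and> \<rho> (orbit u j) (orbit u (Suc j)) < \<epsilon> \<and> orbit u j \<noteq> z \<and> orbit u j \<noteq> S z"
proof -
  have "eventually (\<lambda>n. \<rho> (orbit u n) z < \<epsilon>) sequentially"
    using lim \<open>0 < \<epsilon>\<close> unfolding bv_converges_def eventually_sequentially by blast
  moreover have "eventually (\<lambda>n. \<rho> (orbit u n) (orbit u (Suc n)) < \<epsilon>) sequentially"
    using eventually_geometric_less[OF rate_nonneg rate_less_1 \<open>0 < \<epsilon>\<close>, of "\<rho> u (S u)"]
    by (rule eventually_mono) (rule le_less_trans[OF orbit_step_le_geometric])
  ultimately have "eventually (\<lambda>n. \<rho> (orbit u n) z < \<epsilon> \<and> \<rho> (orbit u n) (orbit u (Suc n)) < \<epsilon>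
      \<and> orbit u n \<noteq> z \<and> orbit u n \<noteq> S z) sequentially"
    using eventually_orbit_neq[OF inj, of z] eventually_orbit_neq[OF inj, of "S z"]
    by eventually_elim blast
  then show ?thesis
    using that unfolding eventually_sequentially by blast
qed

lemma orbit_limit_dist_bound:
  fixes \<epsilon> :: real
  assumes inj: "inj (orbit u)" and lim: "bv_converges \<rho> (orbit u) z"
    and "S z \<noteq> z" and "0 < \<epsilon>"
  shows "\<rho> z (S z) \<le> \<theta> z (S z) * ((real v + 1) * \<epsilon> + min \<beta> \<gamma> * \<rho> z (S z))"
proof -
  obtain n where near: "\<And>j. n \<le> j \<Longrightarrow> \<rho> (orbit u j) z < \<epsilon>
      \<and> \<rho> (orbit u j) (orbit u (Suc j)) < \<epsilon> \<and> orbit u j \<noteq> z \<and> orbit u j \<noteq> S z"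
    using orbit_eventually_near[OF inj lim \<open>0 < \<epsilon>\<close>] by blast
  define p where "p i = (if i = 0 then z else if i = Suc v then S z else orbit u (n + i))" for i
  have "orbit u (n + i) \<noteq> z" "orbit u (n + i) \<noteq> S z" for i
    using near[of "n + i"] by auto
  moreover have "orbit u (n + i) = orbit u (n + j) \<longleftrightarrow> i = j" for i j
    using injD[OF inj] by fastforce
  ultimately have "inj_on p {0..Suc v}"
    using \<open>S z \<noteq> z\<close> unfolding inj_on_def p_def by metis
  then have "\<rho> z (S z) \<le> \<theta> z (S z) * (\<Sum>i\<le>v. \<rho> (p i) (p (Suc i)))"
    using bv_metric_chain[OF metric] by (fastforce simp: p_def)
  also have "(\<Sum>i\<le>v. \<rho> (p i) (p (Suc i))) \<le> (\<Sum>i\<le>v. \<epsilon> + (if i = v then min \<beta> \<gamma> * \<rho> z (S z) else 0))"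
  proof (rule sum_mono)
    fix i
    assume "i \<in> {..v}"
    then consider "i = v" | "i = 0" "i < v" | "0 < i" "i < v"
      by fastforce
    then show "\<rho> (p i) (p (Suc i)) \<le> \<epsilon> + (if i = v then min \<beta> \<gamma> * \<rho> z (S z) else 0)"
    proof cases
      case 1
      obtain w where "v = Suc w"
        using v_pos by (cases v) auto
      then have "\<rho> (p i) (p (Suc i)) = \<rho> (S (orbit u (n + w))) (S z)"
        using 1 by (simp add: p_def)
      also have "\<dots> \<le> \<epsilon> + min \<beta> \<gamma> * \<rho> z (S z)"
        using near[of "n + w"] by (intro dist_image_le_if_near) auto
      finally show ?thesis
        using 1 by simp
    next
      case 2
      then show ?thesis
        using near[of "Suc n"] by (simp add: p_def dist_commute)
    next
      case 3
      then show ?thesis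
        using near[of "n + i"] by (simp add: p_def)
    qed
  qed
  also have "\<dots> = (real v + 1) * \<epsilon> + min \<beta> \<gamma> * \<rho> z (S z)"
    by (simp add: sum.distrib)
  finally show ?thesis
    using theta_ge_1[of z "S z"] by (simp add: mult_left_mono)
qed

lemma orbit_limit_is_fixed_point:
  assumes inj: "inj (orbit u)" and lim: "bv_converges \<rho> (orbit u) z"
    and small: "min \<beta> \<gamma> * \<theta> z (S z) < 1"
  shows "S z = z"
proof (rule ccontr)
  assume "S z \<noteq> z"
  let ?t = "\<theta> z (S z)"
  have t_pos: "0 < ?t * (real v + 1)"
    using theta_ge_1[of z "S z"] by simp
  have "(1 - min \<beta> \<gamma> * ?t) * \<rho> z (S z) \<le> 0"
  proof (rule field_le_epsilon)
    fix e :: real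
    assume "0 < e"
    have "\<rho> z (S z) \<le> ?t * ((real v + 1) * (e / (?t * (real v + 1))) + min \<beta> \<gamma> * \<rho> z (S z))"
      using \<open>0 < e\<close> t_pos by (intro orbit_limit_dist_bound[OF inj lim \<open>S z \<noteq> z\<close>]) simp
    also have "\<dots> = e + min \<beta> \<gamma> * ?t * \<rho> z (S z)"
      using t_pos by (simp add: field_simps)
    finally show "(1 - min \<beta> \<gamma> * ?t) * \<rho> z (S z) \<le> 0 + e"
      by (simp add: algebra_simps)
  qed
  then have "\<rho> z (S z) \<le> 0"
    using small by (simp add: mult_le_0_iff)
  then show False
    using \<open>S z \<noteq> z\<close> dist_nonneg[of z "S z"] dist_eq_0_iff[of z "S z"] by simp
qed

end

theorem mainTheorem11:
  fixes v :: nat and \<theta> \<rho> :: "'a \<Rightarrow> 'a \<Rightarrow> real" and S :: "'a \<Rightarrow> 'a"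
    and \<alpha> \<beta> \<gamma> :: real
  assumes v: "v \<ge> 1"
    and metric: "bv_metric v \<theta> \<rho>"
    and complete: "bv_complete \<rho>"
    and bounded: "\<exists>K. \<forall>u w. \<theta> u w \<le> K"
    and contr: "\<forall>u w. \<rho> (S u) (S w) \<le> \<alpha> * \<rho> u w + \<beta> * \<rho> u (S u) + \<gamma> * \<rho> w (S w)"
    and nonneg: "\<alpha> \<ge> 0" "\<beta> \<ge> 0" "\<gamma> \<ge> 0"
    and sum_lt: "\<alpha> + \<beta> + \<gamma> < 1"
    and Gamma: "\<forall>u. min \<beta> \<gamma> < 1 / max (\<theta> u (S u)) (\<theta> (S u) u)"
  shows "(\<exists>!x. S x = x) \<and>
         (\<forall>u0 x. S x = x \<longrightarrow> bv_converges \<rho> (\<lambda>n. (S ^^ n) u0) x)"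
proof -
  interpret bv_reich_contraction v \<theta> \<rho> S \<alpha> \<beta> \<gamma>
    using v metric contr nonneg sum_lt by unfold_locales auto
  obtain K where K: "\<And>u w. \<theta> u w \<le> K"
    using bounded by blast
  have "\<exists>z. S z = z"
  proof (cases "\<exists>n. S (orbit undefined n) = orbit undefined n")
    case True
    then show ?thesis by blast
  next
    case False
    then have inj: "inj (orbit undefined)"
      by (intro orbit_inj) blast
    then obtain z where lim: "bv_converges \<rho> (orbit undefined) z"
      using complete orbit_cauchy[OF inj K] unfolding bv_complete_def by blast
    have "min \<beta> \<gamma> * \<theta> z (S z) < 1"
      using nonneg theta_ge_1 Gamma by (intro mult_less_1_if_less_inverse_max) auto
    then show ?thesis
      using orbit_limit_is_fixed_point[OF inj lim] by blast
  qed
  then show ?thesis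
    using fixed_point_unique orbit_converges_to_fixed_point by blast
qed

end
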